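(* Let $G=(V,E)$ be a graph with a partition $(V_1,V_2)$ of $V$ such that $G[V_1]$ and $G[V_2]$ are $P_5$-free, and let $k$ be an integer. Suppose that: $k\ge 1$; $G$ contains a $P_5$; every vertex of $G$ lies on some $P_5$ in $G$; every $P_5$ in $G$ contains at least $4$ vertices of $V_2$; and there is no vertex $v\in V_2$ that is isolated in $G[V_2]$ and for which there is a path $(v,w,x,y,z)$ in $G$ with $w\in V_1$. Let $v\in V_2$ be a vertex adjacent to at least two vertices of $V_1$, and let $C_v$ be the connected component of $G[V_2]$ containing $v$. Then every vertex $w\in V_1$ adjacent to $v$ satisfies $N(w)\subseteq V(C_v)$.
   Context: Graphs are finite, simple and undirected. A $P_5$ is a path on $5$ vertices (as a not necessarily induced subgraph), written as the sequence of its vertices; a graph is $P_5$-free if it contains no $P_5$. $G[X]$ denotes the subgraph induced by $X$; $N(w)$ is the set of neighbours of $w$ in $G$. *)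

theory Defs
  imports Main
begin

definition simple_graph :: "'a set \<Rightarrow> ('a \<Rightarrow> 'a \<Rightarrow> bool) \<Rightarrow> bool" where
  "simple_graph V E \<longleftrightarrow> finite V \<and> (\<forall>x y. E x y \<longrightarrow> x \<in> V \<and> y \<in> V)
     \<and> (\<forall>x y. E x y \<longrightarrow> E y x) \<and> (\<forall>x. \<not> E x x)"

text \<open>A (not necessarily induced) path in G[X], given as the sequence of its vertices.\<close>
definition is_path_in :: "('a \<Rightarrow> 'a \<Rightarrow> bool) \<Rightarrow> 'a set \<Rightarrow> 'a list \<Rightarrow> bool" where
  "is_path_in E X xs \<longleftrightarrow> distinct xs \<and> set xs \<subseteq> X
     \<and> (\<forall>i. Suc i < length xs \<longrightarrow> E (xs ! i) (xs ! Suc i))"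

definition is_P5_in :: "('a \<Rightarrow> 'a \<Rightarrow> bool) \<Rightarrow> 'a set \<Rightarrow> 'a list \<Rightarrow> bool" where
  "is_P5_in E X xs \<longleftrightarrow> length xs = 5 \<and> is_path_in E X xs"

definition P5_free :: "('a \<Rightarrow> 'a \<Rightarrow> bool) \<Rightarrow> 'a set \<Rightarrow> bool" where
  "P5_free E X \<longleftrightarrow> \<not> (\<exists>xs. is_P5_in E X xs)"

definition nbhd :: "('a \<Rightarrow> 'a \<Rightarrow> bool) \<Rightarrow> 'a \<Rightarrow> 'a set" where
  "nbhd E w = {u. E w u}"

definition component :: "('a \<Rightarrow> 'a \<Rightarrow> bool) \<Rightarrow> 'a set \<Rightarrow> 'a \<Rightarrow> 'a set" where
  "component E X v = {u. (v, u) \<in> {(a, b). a \<in> X \<and> b \<in> X \<and> E a b}\<^sup>* }"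

end

theory Submission
  imports Defs
begin

text \<open>
  Every P5 meets V1 at most once. If w had a neighbour u in V1, then a P5 through u could be
  rerouted through the edge wu (using the second neighbour v of w when u is the middle vertex),
  giving a P5 with two vertices in V1. So u is in V2. If u were outside C_v, it would not be
  adjacent to v, and any V2-neighbour x of u would give the P5 w' v w u x, where w' is another
  V1-neighbour of v. Hence u is isolated in G[V2]; but then on a P5 through u either u is an end
  whose successor lies in V1, which is excluded, or u is inner and its two path neighbours lie
  in V1.
\<close>

lemma is_P5_in_iff:
  "is_P5_in E X [a, b, c, d, e] \<longleftrightarrow>
     distinct [a, b, c, d, e] \<and> {a, b, c, d, e} \<subseteq> X \<and> E a b \<and> E b c \<and> E c d \<and> E d e"
  unfolding is_P5_in_def is_path_in_def by (auto simp: less_Suc_eq numeral_eq_Suc)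

lemma is_P5_inE:
  assumes "is_P5_in E X xs"
  obtains a b c d e where "xs = [a, b, c, d, e]"
proof -
  have "length xs = 5" using assms by (simp add: is_P5_in_def)
  then have "\<exists>a b c d e. xs = [a, b, c, d, e]" by (auto simp: numeral_eq_Suc length_Suc_conv)
  then show thesis using that by blast
qed

lemma is_P5_in_rev:
  assumes "symp E" "is_P5_in E X xs"
  shows "is_P5_in E X (rev xs)"
proof -
  obtain a b c d e where "xs = [a, b, c, d, e]" using assms(2) by (rule is_P5_inE)
  then show ?thesis using assms by (auto simp: is_P5_in_iff dest: sympD)
qed

lemma P5_outside_vertex_unique:
  assumes "\<forall>xs. is_P5_in E V xs \<longrightarrow> card (set xs \<inter> A) \<ge> 4"
    and "is_P5_in E V xs" "x \<in> set xs" "y \<in> set xs" "x \<notin> A" "y \<notin> A"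
  shows "x = y"
proof (rule ccontr)
  assume "x \<noteq> y"
  have "card (set xs) = 5" using assms(2) by (simp add: is_P5_in_def is_path_in_def distinct_card)
  then have "card (set xs - {x, y}) = 3"
    using assms(3,4) \<open>x \<noteq> y\<close> by (simp add: card_Diff_subset)
  moreover have "card (set xs \<inter> A) \<le> card (set xs - {x, y})"
    using assms(5,6) by (intro card_mono) auto
  moreover have "card (set xs \<inter> A) \<ge> 4" using assms(1,2) by blast
  ultimately show False by simp
qed

lemma P5_through_neighbour:
  assumes "symp E" "is_P5_in E V xs" "u \<in> set xs"
    and "w \<in> V" "w \<notin> set xs" "E w u"
    and "v \<in> V" "E w v" "v \<noteq> u" "v \<noteq> w"
  obtains ys where "is_P5_in E V ys" "u \<in> set ys" "w \<in> set ys"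
proof -
  obtain a b c d e where xs: "xs = [a, b, c, d, e]" using assms(2) by (rule is_P5_inE)
  note P = assms(2)[unfolded xs is_P5_in_iff]
  note sym = sympD[OF assms(1)]
  have "u = a \<or> u = b \<or> u = c \<or> u = d \<or> u = e" using assms(3) xs by simp
  moreover have "u \<noteq> c" if "v \<in> {a, b}" "v \<in> {d, e}" using that P by auto
  ultimately consider "u = a" | "u = b" | "u = c" "v \<notin> {a, b}" | "u = c" "v \<notin> {d, e}"
    | "u = d" | "u = e"
    by blast
  then show thesis
  proof cases
    case 1
    then show thesis using P assms
      by (intro that[of "[w, a, b, c, d]"]) (auto simp: is_P5_in_iff xs dest: sym)
  next
    case 2
    then show thesis using P assms
      by (intro that[of "[w, b, c, d, e]"]) (auto simp: is_P5_in_iff xs dest: sym)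
  next
    case 3
    then show thesis using P assms
      by (intro that[of "[a, b, c, w, v]"]) (auto simp: is_P5_in_iff xs dest: sym)
  next
    case 4
    then show thesis using P assms
      by (intro that[of "[e, d, c, w, v]"]) (auto simp: is_P5_in_iff xs dest: sym)
  next
    case 5
    then show thesis using P assms
      by (intro that[of "[w, d, c, b, a]"]) (auto simp: is_P5_in_iff xs dest: sym)
  next
    case 6
    then show thesis using P assms
      by (intro that[of "[w, e, d, c, b]"]) (auto simp: is_P5_in_iff xs dest: sym)
  qed
qed

lemma component_edgeI:
  assumes "v \<in> X" "u \<in> X" "E v u"
  shows "u \<in> component E X v"
  using assms unfolding component_def by (simp add: r_into_rtrancl)

lemma all_neighbours_in_if_some_neighbour_in:
  assumes "simple_graph V E"
    and "\<forall>x\<in>V. \<exists>xs. is_P5_in E V xs \<and> x \<in> set xs"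
    and "\<forall>xs. is_P5_in E V xs \<longrightarrow> card (set xs \<inter> A) \<ge> 4"
    and "w \<notin> A" "E w v" "v \<in> A" "E w u"
  shows "u \<in> A"
proof (rule ccontr)
  assume "u \<notin> A"
  have "symp E" and inV: "\<And>x y. E x y \<Longrightarrow> x \<in> V \<and> y \<in> V" and "u \<noteq> w"
    using assms(1,7) unfolding simple_graph_def symp_def by blast+
  obtain xs where xs: "is_P5_in E V xs" "u \<in> set xs" using assms(2,7) inV by blast
  have "w \<notin> set xs"
    using P5_outside_vertex_unique[OF assms(3) xs(1)] xs(2) \<open>u \<notin> A\<close> assms(4) \<open>u \<noteq> w\<close> by blast
  moreover have "v \<noteq> u" "v \<noteq> w" using \<open>u \<notin> A\<close> assms(4,6) by auto
  ultimately obtain ys where "is_P5_in E V ys" "u \<in> set ys" "w \<in> set ys"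
    using P5_through_neighbour[OF \<open>symp E\<close> xs] assms(5,7) inV by metis
  then show False
    using P5_outside_vertex_unique[OF assms(3)] \<open>u \<notin> A\<close> assms(4) \<open>u \<noteq> w\<close> by blast
qed

lemma P5_vertex_has_neighbour_in:
  assumes "symp E"
    and "\<forall>xs. is_P5_in E V xs \<longrightarrow> card (set xs \<inter> V2) \<ge> 4"
    and "V \<subseteq> V1 \<union> V2"
    and "\<not> (\<exists>xs. is_P5_in E V xs \<and> xs ! 0 = u \<and> xs ! 1 \<in> V1)"
    and "is_P5_in E V xs" "u \<in> set xs"
  shows "\<exists>y\<in>V2. E u y"
proof (rule ccontr)
  assume "\<not> (\<exists>y\<in>V2. E u y)"
  with assms(3) have nb: "y \<in> V1" "y \<notin> V2" if "E u y" "y \<in> V" for y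
    using that by auto
  obtain a b c d e where xs: "xs = [a, b, c, d, e]" using assms(5) by (rule is_P5_inE)
  note P = assms(5)[unfolded xs is_P5_in_iff]
  note sym = sympD[OF assms(1)]
  note unique = P5_outside_vertex_unique[OF assms(2,5)]
  have "u = a \<or> u = b \<or> u = c \<or> u = d \<or> u = e" using assms(6) xs by simp
  then show False
  proof (elim disjE)
    assume "u = a"
    then have "xs ! 0 = u" "xs ! 1 \<in> V1" using nb[of b] P by (simp_all add: xs)
    then show False using assms(4,5) by blast
  next
    assume "u = e"
    then have "rev xs ! 0 = u" "rev xs ! 1 \<in> V1" using nb[of d] P by (auto simp: xs dest: sym)
    then show False using assms(4) is_P5_in_rev[OF assms(1,5)] by blast
  next
    assume "u = b"
    then show False using unique[of a c] nb[of a] nb[of c] P by (auto simp: xs dest: sym)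
  next
    assume "u = c"
    then show False using unique[of b d] nb[of b] nb[of d] P by (auto simp: xs dest: sym)
  next
    assume "u = d"
    then show False using unique[of c e] nb[of c] nb[of e] P by (auto simp: xs dest: sym)
  qed
qed

lemma neighbour_in_component:
  assumes "simple_graph V E" "V1 \<union> V2 = V" "V1 \<inter> V2 = {}"
    and "\<forall>x\<in>V. \<exists>xs. is_P5_in E V xs \<and> x \<in> set xs"
    and "\<forall>xs. is_P5_in E V xs \<longrightarrow> card (set xs \<inter> V2) \<ge> 4"
    and "\<not> (\<exists>u\<in>V2. (\<forall>y\<in>V2. \<not> E u y) \<and>
              (\<exists>xs. is_P5_in E V xs \<and> xs ! 0 = u \<and> xs ! 1 \<in> V1))"
    and "v \<in> V2" "w \<in> V1" "w' \<in> V1" "w \<noteq> w'" "E v w" "E v w'"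
    and "E w u" "u \<in> V2"
  shows "u \<in> component E V2 v"
proof (rule ccontr)
  assume "u \<notin> component E V2 v"
  have sym: "E x y \<Longrightarrow> E y x" and inV: "E x y \<Longrightarrow> x \<in> V \<and> y \<in> V"
    and irrefl: "\<not> E x x" for x y
    using assms(1) unfolding simple_graph_def by blast+
  have "v \<in> component E V2 v" by (simp add: component_def)
  with \<open>u \<notin> component E V2 v\<close> have "u \<noteq> v" "\<not> E v u"
    using component_edgeI[OF assms(7,14)] by auto
  obtain xs where xs: "is_P5_in E V xs" "u \<in> set xs" using assms(4,13) inV by blast
  have "symp E" using sym by (blast intro: sympI)
  then have "\<exists>y\<in>V2. E u y"
    using P5_vertex_has_neighbour_in[OF _ assms(5) _ _ xs] assms(2,6,14) by blast
  then obtain x where "x \<in> V2" "E u x" by blast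
  have "x \<noteq> v" "x \<noteq> u" using \<open>\<not> E v u\<close> \<open>E u x\<close> sym irrefl by blast+
  moreover have "{w', v, w, u, x} \<subseteq> V" using inV \<open>E u x\<close> assms(11,12) by blast
  moreover have "E w' v" "E v w" "E w u" "E u x" using sym assms(11-13) \<open>E u x\<close> by blast+
  moreover have "{w', w} \<inter> {v, u, x} = {}" using assms(3,7-9,14) \<open>x \<in> V2\<close> by blast
  ultimately have "is_P5_in E V [w', v, w, u, x]"
    unfolding is_P5_in_iff using \<open>u \<noteq> v\<close> assms(10) by auto
  moreover have "w \<notin> V2" "w' \<notin> V2" using assms(3,8,9) by blast+
  ultimately have "w' = w"
    using P5_outside_vertex_unique[OF assms(5), of "[w', v, w, u, x]" w' w] by simp
  then show False using assms(10) by simp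
qed

theorem lemma5:
  fixes V V1 V2 :: "'a set" and E :: "'a \<Rightarrow> 'a \<Rightarrow> bool" and k :: int and v w :: 'a
  assumes "simple_graph V E"
    and "V1 \<union> V2 = V" and "V1 \<inter> V2 = {}"
    and "P5_free E V1" and "P5_free E V2"
    and "k \<ge> 1"
    and "\<exists>xs. is_P5_in E V xs"
    and "\<forall>x\<in>V. \<exists>xs. is_P5_in E V xs \<and> x \<in> set xs"
    and "\<forall>xs. is_P5_in E V xs \<longrightarrow> card (set xs \<inter> V2) \<ge> 4"
    and "\<not> (\<exists>u\<in>V2. (\<forall>y\<in>V2. \<not> E u y) \<and>
              (\<exists>xs. is_P5_in E V xs \<and> xs ! 0 = u \<and> xs ! 1 \<in> V1))"
    and "v \<in> V2" and "card {u \<in> V1. E v u} \<ge> 2"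
    and "w \<in> V1" and "E v w"
  shows "nbhd E w \<subseteq> component E V2 v"
proof
  fix u
  assume "u \<in> nbhd E w"
  then have "E w u" by (simp add: nbhd_def)
  have "\<not> {u \<in> V1. E v u} \<subseteq> {w}"
    using assms(12) card_mono[of "{w}" "{u \<in> V1. E v u}"] by auto
  then obtain w' where "w' \<in> V1" "E v w'" "w \<noteq> w'" by blast
  have "E w v" using assms(1,14) by (simp add: simple_graph_def)
  then have "u \<in> V2"
    using all_neighbours_in_if_some_neighbour_in[OF assms(1,8,9)] \<open>E w u\<close> assms(3,11,13) by blast
  then show "u \<in> component E V2 v"
    using neighbour_in_component[OF assms(1-3,8-11,13) \<open>w' \<in> V1\<close> \<open>w \<noteq> w'\<close> assms(14)]
      \<open>E v w'\<close> \<open>E w u\<close> by blast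
qed

end
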